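(* Let $a,b\ge1$, let $L$ be a Latin square for the $a\times a$ system and $\bar L$ a Latin square for the $b\times b$ system, both with symbols in the nonnegative integers, such that $L$ removes $[\mathrm{span}(\Delta x)]^{\perp}$ and $\bar L$ removes $[\mathrm{span}(\Delta\bar x)]^{\perp}$, where $\Delta x\in\Delta\mathcal{S}^{2a}$ and $\Delta\bar x\in\Delta\mathcal{S}^{2b}$ are nonzero. Then $L\otimes\bar L$ is a Latin square for the $(a+b)\times(a+b)$ system, and for every $k\in\mathbb{C}$ it removes $[\mathrm{span}(\mathrm{comp}(\Delta x,k\Delta\bar x))]^{\perp}$.
   Context: $\mathcal{S}$ is a signal set of size $M$ with labelling bijection $\mu:\mathbb{Z}_M\to\mathcal{S}$; $\Delta\mathcal{S}=\{s-s':s,s'\in\mathcal{S}\}$; $\mu(u)=(\mu(u_1),\dots,\mu(u_m))^T$ for $u\in\mathbb{Z}_M^m$. For $V\subseteq\mathbb{C}^N$, $V^\perp=\{y:y^Tv=0\ \forall v\in V\}$. A Latin square for the $n\times n$ system is a map $L:\mathbb{Z}_M^{n}\times\mathbb{Z}_M^{n}\to\Sigma$ with no symbol repeated in any row or column. For nonzero $w\in\mathbb{C}^{2n}$, $L$ removes $[\mathrm{span}(w)]^\perp$ if $L(u,v)=L(u',v')$ whenever $[\mu(u)^T-\mu(u')^T\;\;\mu(v)^T-\mu(v')^T]^T\in\mathrm{span}(w)\setminus\{0\}$. For $y\in\mathbb{C}^{2a}$, $z\in\mathbb{C}^{2b}$, the compound vector is $\mathrm{comp}(y,z)=[y_{[1:a]}^T\;z_{[1:b]}^T\;y_{[a+1:2a]}^T\;z_{[b+1:2b]}^T]^T\in\mathbb{C}^{2a+2b}$,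 where $y_{[i:j]}$ is the subvector of components $i$ through $j$. The Cartesian product $L\otimes\bar L$ is defined on $\mathbb{Z}_M^{a+b}\times\mathbb{Z}_M^{a+b}$ by writing row index $(u,\bar u)$ and column index $(v,\bar v)$ with $u,v\in\mathbb{Z}_M^a$ (first $a$ components) and $\bar u,\bar v\in\mathbb{Z}_M^b$ (last $b$ components), and setting $(L\otimes\bar L)((u,\bar u),(v,\bar v))=L(u,v)+\bar L(\bar u,\bar v)\,(\max L+1)$, where $\max L$ is the largest symbol appearing in $L$. *)

theory Defs
  imports Complex_Main
begin

text \<open>Vectors are lists. Z_M is {0..<M} (nat), so Z_M^n is the set of nat lists of
  length n with entries below M. Vectors in C^N are complex lists of length N.\<close>

definition zm_vecs :: "nat \<Rightarrow> nat \<Rightarrow> nat list set" where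
  "zm_vecs M n = {u. length u = n \<and> (\<forall>x\<in>set u. x < M)}"

definition signal_set :: "nat \<Rightarrow> complex set \<Rightarrow> (nat \<Rightarrow> complex) \<Rightarrow> bool" where
  "signal_set M S mu \<longleftrightarrow> bij_betw mu {..<M} S"

definition diff_set :: "complex set \<Rightarrow> complex set" where
  "diff_set S = {s - s' | s s'. s \<in> S \<and> s' \<in> S}"

definition latin_square :: "nat \<Rightarrow> nat \<Rightarrow> (nat list \<Rightarrow> nat list \<Rightarrow> 'b) \<Rightarrow> bool" where
  "latin_square M n L \<longleftrightarrow>
     (\<forall>u\<in>zm_vecs M n. inj_on (\<lambda>v. L u v) (zm_vecs M n)) \<and>
     (\<forall>v\<in>zm_vecs M n. inj_on (\<lambda>u. L u v) (zm_vecs M n))"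

definition cspan :: "complex list \<Rightarrow> complex list set" where
  "cspan w = {map (\<lambda>x. c * x) w | c. True}"

definition zero_vec :: "nat \<Rightarrow> complex list" where
  "zero_vec N = replicate N 0"

definition diff_vec :: "(nat \<Rightarrow> complex) \<Rightarrow> nat list \<Rightarrow> nat list \<Rightarrow> nat list \<Rightarrow> nat list \<Rightarrow> complex list" where
  "diff_vec mu u u' v v' =
     map2 (\<lambda>p q. mu p - mu q) u u' @ map2 (\<lambda>p q. mu p - mu q) v v'"

definition removes_perp_span ::
  "nat \<Rightarrow> (nat \<Rightarrow> complex) \<Rightarrow> nat \<Rightarrow> (nat list \<Rightarrow> nat list \<Rightarrow> 'b) \<Rightarrow> complex list \<Rightarrow> bool" where
  "removes_perp_span M mu n L w \<longleftrightarrow>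
     (\<forall>u\<in>zm_vecs M n. \<forall>u'\<in>zm_vecs M n. \<forall>v\<in>zm_vecs M n. \<forall>v'\<in>zm_vecs M n.
        diff_vec mu u u' v v' \<in> cspan w - {zero_vec (2 * n)} \<longrightarrow> L u v = L u' v')"

definition comp_vec :: "nat \<Rightarrow> nat \<Rightarrow> complex list \<Rightarrow> complex list \<Rightarrow> complex list" where
  "comp_vec a b y z = take a y @ take b z @ drop a y @ drop b z"

definition latin_max :: "nat \<Rightarrow> nat \<Rightarrow> (nat list \<Rightarrow> nat list \<Rightarrow> nat) \<Rightarrow> nat" where
  "latin_max M a L = Max {L u v | u v. u \<in> zm_vecs M a \<and> v \<in> zm_vecs M a}"

definition latin_cart ::
  "nat \<Rightarrow> nat \<Rightarrow> (nat list \<Rightarrow> nat list \<Rightarrow> nat) \<Rightarrow> (nat list \<Rightarrow> nat list \<Rightarrow> nat)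
     \<Rightarrow> nat list \<Rightarrow> nat list \<Rightarrow> nat" where
  "latin_cart M a L Lb x y =
     L (take a x) (take a y) + Lb (drop a x) (drop a y) * (latin_max M a L + 1)"

end

theory Submission
  imports Defs
begin

(* Split every index x of length a+b into its first a and last b
   components.  (1) The symbol of L (x) Lbar is a two-digit mixed-radix number
   whose low digit is an L-symbol (< max L + 1) and high digit an Lbar-symbol,
   so equal symbols mean equal digits; hence the product of Latin squares is a
   Latin square.  (2) The stacked difference vector of (a+b)-indices is the
   compound vector of the difference vectors of the two halves, and the
   compound vector commutes with scalar multiplication and is injective.  So a
   difference equal to c * comp(dx, dz) splits into differences c * dx and
   c * dz of the halves.  (3) A square removing span(w) identifies all
   pairs whose difference is ANY scalar multiple of w: the zero multiple forces
   equal indices because the labelling mu is injective.  Applying (3) to both halves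
   gives equal digits, hence the product removes span(comp(dx, dz)); finally
   removing span(dxb) implies removing span(k dxb), so dz = k dxb is allowed. *)

lemma zm_vecs_take: "x \<in> zm_vecs M (a + b) \<Longrightarrow> take a x \<in> zm_vecs M a"
  by (auto simp: zm_vecs_def dest: in_set_takeD)

lemma zm_vecs_drop: "x \<in> zm_vecs M (a + b) \<Longrightarrow> drop a x \<in> zm_vecs M b"
  by (auto simp: zm_vecs_def dest: in_set_dropD)

lemma take_drop_eqI: "take a x = take a y \<Longrightarrow> drop a x = drop a y \<Longrightarrow> x = y"
  by (metis append_take_drop_id)

lemma finite_zm_vecs: "finite (zm_vecs M n)"
proof -
  have "zm_vecs M n = {xs. set xs \<subseteq> {..<M} \<and> length xs = n}"
    by (auto simp: zm_vecs_def)
  thus ?thesis using finite_lists_length_eq[of "{..<M}" n] by simp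
qed

lemma latin_symbol_less_radix:
  assumes "u \<in> zm_vecs M a" "v \<in> zm_vecs M a"
  shows "L u v < latin_max M a L + 1"
proof -
  have "{L u v | u v. u \<in> zm_vecs M a \<and> v \<in> zm_vecs M a}
          = (\<lambda>(u, v). L u v) ` (zm_vecs M a \<times> zm_vecs M a)"
    by auto
  hence "finite {L u v | u v. u \<in> zm_vecs M a \<and> v \<in> zm_vecs M a}"
    using finite_zm_vecs by simp
  hence "L u v \<le> latin_max M a L"
    unfolding latin_max_def using assms by (intro Max_ge) blast+
  thus ?thesis by simp
qed

lemma two_digit_eq:
  fixes l1 l2 h1 h2 m :: nat
  assumes "l1 < m" "l2 < m" "l1 + h1 * m = l2 + h2 * m"
  shows "l1 = l2 \<and> h1 = h2"
proof -
  have "l1 = (l1 + h1 * m) mod m" using assms(1) by simp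
  also have "\<dots> = l2" using assms(2,3) by simp
  finally have "l1 = l2" .
  with assms show ?thesis by simp
qed

lemma latin_cart_eq_iff:
  assumes "x \<in> zm_vecs M (a + b)" "y \<in> zm_vecs M (a + b)"
    and "x' \<in> zm_vecs M (a + b)" "y' \<in> zm_vecs M (a + b)"
  shows "latin_cart M a L Lb x y = latin_cart M a L Lb x' y' \<longleftrightarrow>
           L (take a x) (take a y) = L (take a x') (take a y') \<and>
           Lb (drop a x) (drop a y) = Lb (drop a x') (drop a y')"
  using two_digit_eq[OF latin_symbol_less_radix latin_symbol_less_radix]
    zm_vecs_take[OF assms(1)] zm_vecs_take[OF assms(2)]
    zm_vecs_take[OF assms(3)] zm_vecs_take[OF assms(4)]
  unfolding latin_cart_def by metis

lemma latin_square_row_cancel: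
  "latin_square M n L \<Longrightarrow> u \<in> zm_vecs M n \<Longrightarrow> v \<in> zm_vecs M n \<Longrightarrow> v' \<in> zm_vecs M n
     \<Longrightarrow> L u v = L u v' \<Longrightarrow> v = v'"
  unfolding latin_square_def by (blast dest: inj_onD)

lemma latin_square_col_cancel:
  "latin_square M n L \<Longrightarrow> v \<in> zm_vecs M n \<Longrightarrow> u \<in> zm_vecs M n \<Longrightarrow> u' \<in> zm_vecs M n
     \<Longrightarrow> L u v = L u' v \<Longrightarrow> u = u'"
  unfolding latin_square_def by (blast dest: inj_onD)

lemma latin_cart_latin_square:
  assumes L: "latin_square M a L" and Lb: "latin_square M b Lb"
  shows "latin_square M (a + b) (latin_cart M a L Lb)"
  unfolding latin_square_def
proof (intro conjI ballI inj_onI)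
  fix u v v' assume idx: "u \<in> zm_vecs M (a + b)" "v \<in> zm_vecs M (a + b)" "v' \<in> zm_vecs M (a + b)"
    and "latin_cart M a L Lb u v = latin_cart M a L Lb u v'"
  hence "L (take a u) (take a v) = L (take a u) (take a v')"
    and "Lb (drop a u) (drop a v) = Lb (drop a u) (drop a v')"
    using latin_cart_eq_iff[OF idx(1,2) idx(1,3)] by simp_all
  thus "v = v'"
    using latin_square_row_cancel[OF L] latin_square_row_cancel[OF Lb] idx
      zm_vecs_take zm_vecs_drop take_drop_eqI by meson
next
  fix v u u' assume idx: "v \<in> zm_vecs M (a + b)" "u \<in> zm_vecs M (a + b)" "u' \<in> zm_vecs M (a + b)"
    and "latin_cart M a L Lb u v = latin_cart M a L Lb u' v"
  hence "L (take a u) (take a v) = L (take a u') (take a v)"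
    and "Lb (drop a u) (drop a v) = Lb (drop a u') (drop a v)"
    using latin_cart_eq_iff[OF idx(2,1) idx(3,1)] by simp_all
  thus "u = u'"
    using latin_square_col_cancel[OF L] latin_square_col_cancel[OF Lb] idx
      zm_vecs_take zm_vecs_drop take_drop_eqI by meson
qed

lemma comp_vec_map: "map f (comp_vec a b y z) = comp_vec a b (map f y) (map f z)"
  by (simp add: comp_vec_def take_map drop_map)

lemma comp_vec_inj:
  assumes "length y = 2 * a" "length y' = 2 * a" "length z = 2 * b" "length z' = 2 * b"
    and "comp_vec a b y z = comp_vec a b y' z'"
  shows "y = y' \<and> z = z'"
proof -
  have "take a y = take a y' \<and> take b z = take b z' \<and> drop a y = drop a y' \<and> drop b z = drop b z'"
    using assms(5) unfolding comp_vec_def by (simp add: append_eq_append_conv assms(1-4))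
  thus ?thesis using take_drop_eqI by blast
qed

lemma map2_take_drop:
  "map2 f x y = map2 f (take a x) (take a y) @ map2 f (drop a x) (drop a y)"
  by (metis append_take_drop_id drop_map drop_zip take_map take_zip)

lemma diff_vec_split:
  assumes "length x = a + b" "length x' = a + b" "length y = a + b" "length y' = a + b"
  shows "diff_vec mu x x' y y' =
           comp_vec a b (diff_vec mu (take a x) (take a x') (take a y) (take a y'))
                        (diff_vec mu (drop a x) (drop a x') (drop a y) (drop a y'))"
  using assms
  by (simp add: diff_vec_def comp_vec_def take_zip drop_zip take_map drop_map
      map2_take_drop[of _ x x' a] map2_take_drop[of _ y y' a])

lemma length_diff_vec:
  "u \<in> zm_vecs M n \<Longrightarrow> u' \<in> zm_vecs M n \<Longrightarrow> v \<in> zm_vecs M n \<Longrightarrow> v' \<in> zm_vecs M n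
     \<Longrightarrow> length (diff_vec mu u u' v v') = 2 * n"
  by (simp add: diff_vec_def zm_vecs_def)

lemma map2_diff_eq_zero:
  assumes "inj_on mu {..<M}" "u \<in> zm_vecs M n" "u' \<in> zm_vecs M n"
    and "map2 (\<lambda>p q. mu p - mu q) u u' = replicate n (0::complex)"
  shows "u = u'"
proof (rule nth_equalityI)
  have len: "length u = n" "length u' = n" using assms(2,3) by (auto simp: zm_vecs_def)
  thus "length u = length u'" by simp
  fix i assume i: "i < length u"
  have "mu (u ! i) = mu (u' ! i)"
    using arg_cong[OF assms(4), of "\<lambda>l. l ! i"] i len by simp
  moreover have "u ! i < M" "u' ! i < M" using assms(2,3) i len by (auto simp: zm_vecs_def)
  ultimately show "u ! i = u' ! i" using assms(1) by (auto simp: inj_on_def)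
qed

lemma diff_vec_eq_zero:
  assumes "inj_on mu {..<M}"
    and "u \<in> zm_vecs M n" "u' \<in> zm_vecs M n" "v \<in> zm_vecs M n" "v' \<in> zm_vecs M n"
    and "diff_vec mu u u' v v' = zero_vec (2 * n)"
  shows "u = u' \<and> v = v'"
proof -
  have "map2 (\<lambda>p q. mu p - mu q) u u' @ map2 (\<lambda>p q. mu p - mu q) v v'
          = replicate n 0 @ replicate n 0"
    using assms(6) by (simp add: diff_vec_def zero_vec_def mult_2 replicate_add)
  moreover have "length (map2 (\<lambda>p q. mu p - mu q) u u') = length (replicate n (0::complex))"
    using assms(2,3) by (simp add: zm_vecs_def)
  ultimately have "map2 (\<lambda>p q. mu p - mu q) u u' = replicate n 0 \<and>
      map2 (\<lambda>p q. mu p - mu q) v v' = replicate n 0"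
    by simp
  thus ?thesis using map2_diff_eq_zero[OF assms(1)] assms(2-5) by blast
qed

text \<open>A square removing span(w) identifies all pairs whose difference is any scalar
  multiple of w, including the zero multiple, since mu is injective.\<close>
lemma removes_scalar_multiple:
  assumes "inj_on mu {..<M}" "removes_perp_span M mu n L w"
    and "u \<in> zm_vecs M n" "u' \<in> zm_vecs M n" "v \<in> zm_vecs M n" "v' \<in> zm_vecs M n"
    and "diff_vec mu u u' v v' = map (\<lambda>z. c * z) w"
  shows "L u v = L u' v'"
proof (cases "diff_vec mu u u' v v' = zero_vec (2 * n)")
  case True
  thus ?thesis using diff_vec_eq_zero[OF assms(1,3-6)] by simp
next
  case False
  hence "diff_vec mu u u' v v' \<in> cspan w - {zero_vec (2 * n)}"
    using assms(7) by (auto simp: cspan_def)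
  thus ?thesis using assms(2-6) unfolding removes_perp_span_def by blast
qed

lemma latin_cart_removes:
  assumes mu: "inj_on mu {..<M}"
    and len: "length dx = 2 * a" "length dxb = 2 * b"
    and rem: "removes_perp_span M mu a L dx" "removes_perp_span M mu b Lb dxb"
  shows "removes_perp_span M mu (a + b) (latin_cart M a L Lb) (comp_vec a b dx dxb)"
  unfolding removes_perp_span_def
proof (intro ballI impI)
  fix x x' y y'
  assume idx: "x \<in> zm_vecs M (a + b)" "x' \<in> zm_vecs M (a + b)"
    "y \<in> zm_vecs M (a + b)" "y' \<in> zm_vecs M (a + b)"
    and "diff_vec mu x x' y y' \<in> cspan (comp_vec a b dx dxb) - {zero_vec (2 * (a + b))}"
  then obtain c where "diff_vec mu x x' y y' = map (\<lambda>z. c * z) (comp_vec a b dx dxb)"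
    by (auto simp: cspan_def)
  moreover have tk: "take a x \<in> zm_vecs M a" "take a x' \<in> zm_vecs M a"
      "take a y \<in> zm_vecs M a" "take a y' \<in> zm_vecs M a"
    using idx by (simp_all add: zm_vecs_take)
  moreover have dr: "drop a x \<in> zm_vecs M b" "drop a x' \<in> zm_vecs M b"
      "drop a y \<in> zm_vecs M b" "drop a y' \<in> zm_vecs M b"
    using idx by (simp_all add: zm_vecs_drop)
  ultimately have "comp_vec a b (diff_vec mu (take a x) (take a x') (take a y) (take a y'))
                      (diff_vec mu (drop a x) (drop a x') (drop a y) (drop a y'))
           = comp_vec a b (map (\<lambda>z. c * z) dx) (map (\<lambda>z. c * z) dxb)"
    using idx by (simp add: diff_vec_split zm_vecs_def comp_vec_map)
  hence "diff_vec mu (take a x) (take a x') (take a y) (take a y') = map (\<lambda>z. c * z) dx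
       \<and> diff_vec mu (drop a x) (drop a x') (drop a y) (drop a y') = map (\<lambda>z. c * z) dxb"
    by (rule comp_vec_inj[rotated 4]) (simp_all add: len length_diff_vec[OF tk] length_diff_vec[OF dr])
  hence "L (take a x) (take a y) = L (take a x') (take a y')"
    and "Lb (drop a x) (drop a y) = Lb (drop a x') (drop a y')"
    using removes_scalar_multiple[OF mu rem(1) tk] removes_scalar_multiple[OF mu rem(2) dr]
    by blast+
  thus "latin_cart M a L Lb x y = latin_cart M a L Lb x' y'"
    using latin_cart_eq_iff idx by blast
qed

text \<open>Removal survives scaling of the vector: span(k w) consists of multiples of w.\<close>
lemma removes_scaled:
  assumes "inj_on mu {..<M}" "removes_perp_span M mu n L w"
  shows "removes_perp_span M mu n L (map (\<lambda>z. k * z) w)"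
  unfolding removes_perp_span_def
proof (intro ballI impI)
  fix u u' v v'
  assume idx: "u \<in> zm_vecs M n" "u' \<in> zm_vecs M n" "v \<in> zm_vecs M n" "v' \<in> zm_vecs M n"
    and "diff_vec mu u u' v v' \<in> cspan (map (\<lambda>z. k * z) w) - {zero_vec (2 * n)}"
  then obtain c where "diff_vec mu u u' v v' = map (\<lambda>z. c * z) (map (\<lambda>z. k * z) w)"
    by (auto simp: cspan_def)
  hence "diff_vec mu u u' v v' = map (\<lambda>z. (c * k) * z) w"
    by (simp add: mult.assoc)
  thus "L u v = L u' v'" using removes_scalar_multiple[OF assms idx] by blast
qed

theorem lemma10:
  fixes M a b :: nat and S :: "complex set" and mu :: "nat \<Rightarrow> complex"
    and L Lb :: "nat list \<Rightarrow> nat list \<Rightarrow> nat" and dx dxb :: "complex list"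
  assumes "signal_set M S mu"
    and "a \<ge> 1" and "b \<ge> 1"
    and "latin_square M a L" and "latin_square M b Lb"
    and "length dx = 2 * a" and "set dx \<subseteq> diff_set S" and "dx \<noteq> zero_vec (2 * a)"
    and "length dxb = 2 * b" and "set dxb \<subseteq> diff_set S" and "dxb \<noteq> zero_vec (2 * b)"
    and "removes_perp_span M mu a L dx" and "removes_perp_span M mu b Lb dxb"
  shows "latin_square M (a + b) (latin_cart M a L Lb) \<and>
         (\<forall>k::complex. removes_perp_span M mu (a + b) (latin_cart M a L Lb)
                         (comp_vec a b dx (map (\<lambda>x. k * x) dxb)))"
proof (intro conjI allI)
  show "latin_square M (a + b) (latin_cart M a L Lb)"
    using latin_cart_latin_square assms(4,5) .
  fix k :: complex
  have mu: "inj_on mu {..<M}" using assms(1) by (simp add: signal_set_def bij_betw_def)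
  show "removes_perp_span M mu (a + b) (latin_cart M a L Lb) (comp_vec a b dx (map (\<lambda>x. k * x) dxb))"
    using latin_cart_removes[OF mu assms(6)] assms(9,12) removes_scaled[OF mu assms(13)] by simp
qed

end
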